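(* Let $P$ be a causal program and $\langle P_b,P_t\rangle$ a partition of $P$ such that no atom occurring in the head of a rule of $P_t$ occurs in $P_b$. An interpretation $I$ is a causal stable model of $P$ if and only if there is a causal stable model $J$ of $P_b$ such that $I$ is a causal stable model of the program $J\cup P_t$, where an interpretation $J$ is identified with the program $\{1: A\leftarrow J(A)\mid A\in At\}$ (a rule with label $1$ whose body is the term $J(A)$).
   Context: Fix a set of labels $Lb$ and a set of atoms $At$. Terms are built by $t::=l\mid\prod S\mid\sum S\mid t_1\cdot t_2$ with $l\in Lb$ and $S$ any (possibly empty or infinite) set of terms; $1:=\prod\emptyset$, $0:=\sum\emptyset$; finite sums/products written with $+$, $*$. Causal values are equivalence classes of terms modulo the axioms of a completely distributive complete lattice with meet $*$ and join $+$ together with: $t\cdot(u\cdot w)=(t\cdot u)\cdot w$; $t=t+u\cdot t\cdot w$ and $u\cdot t\cdot w=t*u\cdot t\cdot w$; $1\cdot t=t=t\cdot1$; $t\cdot0=0=0\cdot t$; $l\cdot l=l$ for labels $l$; $\cdot$ distributes over (possibly infinite) sums on both sides; for terms $c,d,e$ without $+$: $c\cdot d\cdot e=(c\cdot d)*(d\cdot e)$ if $d\ne1$, $c\cdot(d*e)=(c\cdot d)*(c\cdot e)$, $(c*d)\cdot e=(c\cdot e)*(d\cdot e)$. $\mathbf V$ is the set of values, ordered by $t\le u$ iff $t*u=t$; $\mathbf C\subseteq\mathbf V$ is the set of values with a representative without $+$. $G\le_{\max}t$ means $G\in\mathbf C$, $G\le t$ and no $G'\in\mathbf C$ has $G<G'\le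 t$. A causal query is $\psi:\mathbf C\times\mathbf V\to\{0,1\}$ with $\psi(G,t)\le\psi(G,u)$ whenever $t\ge u$; monotonic if $\psi(G,u)\le\psi(G',w)$ whenever $G\le G'$ (any $u,w$). A causal literal is $(\psi::A)$, $A\in At$ (atom $A$ occurs in it). Literals: $(\psi::A)$ (positive), $\neg(\psi::A)$ (negative), $\neg\neg(\psi::A)$ (consistent). A causal program is a set of rules $r:H\leftarrow B_1,\dots,B_m$ with $r\in Lb$ or $r=1$, $H\in At$, each $B_i$ a literal or a term. An interpretation is $I:At\to\mathbf V$, ordered pointwise. $I(\psi::A)=\sum\{G\le_{\max}I(A):\psi(G,I(A))=1\}$; $I(t)=t$ for terms; $I(\neg L)=1$ iff $I(L)=0$ (else $0$); $I(\neg\neg L)=1$ iff $I(L)\ne0$ (else $0$); $I\models L$ iff $I(L)\ne0$. $I$ is a causal model of $P$ iff $(I(B_1)*\dots*I(B_m))\cdot r\le I(H)$ for every rule (empty product $=1$). Reduct: $\psi^t(G,u)=1$ iff there is $G'\in\mathbf C$ with $G'\le G$, $G'\le_{\max}t$, $\psi(G',t)=1$ (else $0$). The reduct of $(\psi::A)$ w.r.t. $I$ is $(\psi::A)$ if $\psi$ is monotonic and $(\psi^{I(A)}::A)$ otherwise. $P^I$: (i) delete every rule whose body has a negative or consistent literal not satisfied by $I$, (ii) delete the remaining negative and consistent literals, (iii) replace each remaining causal literal by its reduct. $P^I$ has a least causal model; $I$ is a causal stable model of $P$ iff $I$ is the least causal model of $P^I$. *)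

theory Defs
  imports Main
begin

text \<open>Graphs are ordered by reverse inclusion (more edges = smaller);
  causal values are represented as sets of causal graphs closed under adding edges
  (ideals w.r.t. that order).\<close>

type_synonym 'l graph = "('l \<times> 'l) set"
type_synonym 'l val = "'l graph set"
type_synonym 'l query = "'l val \<Rightarrow> 'l val \<Rightarrow> bool"

definition causal_graph :: "'l graph \<Rightarrow> bool" where
  "causal_graph G \<longleftrightarrow> (\<forall>a b. (a, b) \<in> G \<longrightarrow> (a, a) \<in> G \<and> (b, b) \<in> G) \<and> trans G"

definition verts :: "'l graph \<Rightarrow> 'l set" where
  "verts G = {a. (a, a) \<in> G}"

definition gconcat :: "'l graph \<Rightarrow> 'l graph \<Rightarrow> 'l graph" where
  "gconcat G1 G2 = trancl (G1 \<union> G2 \<union> verts G1 \<times> verts G2)"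

definition up :: "'l graph \<Rightarrow> 'l val" where
  "up G = {H. causal_graph H \<and> G \<subseteq> H}"

definition is_value :: "'l val \<Rightarrow> bool" where
  "is_value t \<longleftrightarrow> (\<forall>G\<in>t. causal_graph G) \<and> (\<forall>G\<in>t. \<forall>H. causal_graph H \<and> G \<subseteq> H \<longrightarrow> H \<in> t)"

definition vlabel :: "'l \<Rightarrow> 'l val" where
  "vlabel l = up {(l, l)}"

definition vone :: "'l val" where
  "vone = Collect causal_graph"

definition vzero :: "'l val" where
  "vzero = {}"

definition vsum :: "'l val set \<Rightarrow> 'l val" where
  "vsum S = \<Union>S"

definition vprod :: "'l val set \<Rightarrow> 'l val" where
  "vprod S = Collect causal_graph \<inter> \<Inter>S"

definition vapp :: "'l val \<Rightarrow> 'l val \<Rightarrow> 'l val" where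
  "vapp t u = {H. causal_graph H \<and> (\<exists>G1\<in>t. \<exists>G2\<in>u. gconcat G1 G2 \<subseteq> H)}"

text \<open>the set C: values with a representative without +\<close>
definition is_cvalue :: "'l val \<Rightarrow> bool" where
  "is_cvalue G \<longleftrightarrow> (\<exists>g. causal_graph g \<and> G = up g)"

definition maxle :: "'l val \<Rightarrow> 'l val \<Rightarrow> bool" where
  "maxle G t \<longleftrightarrow> is_cvalue G \<and> G \<subseteq> t \<and> \<not> (\<exists>G'. is_cvalue G' \<and> G \<subset> G' \<and> G' \<subseteq> t)"

definition causal_query :: "'l query \<Rightarrow> bool" where
  "causal_query \<psi> \<longleftrightarrow> (\<forall>G t u. is_cvalue G \<and> is_value t \<and> is_value u \<and> u \<subseteq> t
        \<longrightarrow> (\<psi> G t \<longrightarrow> \<psi> G u))"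

definition monotonic_query :: "'l query \<Rightarrow> bool" where
  "monotonic_query \<psi> \<longleftrightarrow> (\<forall>G G' u w. is_cvalue G \<and> is_cvalue G' \<and> is_value u \<and> is_value w
        \<and> G \<subseteq> G' \<longrightarrow> (\<psi> G u \<longrightarrow> \<psi> G' w))"

text \<open>Body elements: positive causal literal, negative literal, consistent literal (double
  negation), or a term (represented by its value, since I(t) = t).\<close>
datatype ('a, 'l) body =
    Pos "'l query" 'a
  | Neg "'l query" 'a
  | Cons "'l query" 'a
  | Tm "'l val"

text \<open>Rules r : H <- B1, ..., Bm; label None stands for 1.\<close>
datatype ('a, 'l) rule = Rule (rlab: "'l option") (rhead: 'a) (rbody: "('a, 'l) body list")

type_synonym ('a, 'l) program = "('a, 'l) rule set"

fun body_queries :: "('a, 'l) body \<Rightarrow> 'l query set" where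
  "body_queries (Pos \<psi> A) = {\<psi>}"
| "body_queries (Neg \<psi> A) = {\<psi>}"
| "body_queries (Cons \<psi> A) = {\<psi>}"
| "body_queries (Tm t) = {}"

fun body_atoms :: "('a, 'l) body \<Rightarrow> 'a set" where
  "body_atoms (Pos \<psi> A) = {A}"
| "body_atoms (Neg \<psi> A) = {A}"
| "body_atoms (Cons \<psi> A) = {A}"
| "body_atoms (Tm t) = {}"

fun body_terms :: "('a, 'l) body \<Rightarrow> 'l val set" where
  "body_terms (Tm t) = {t}"
| "body_terms _ = {}"

definition rule_atoms :: "('a, 'l) rule \<Rightarrow> 'a set" where
  "rule_atoms r = {rhead r} \<union> \<Union> (body_atoms ` set (rbody r))"

definition causal_program :: "('a, 'l) program \<Rightarrow> bool" where
  "causal_program P \<longleftrightarrow> (\<forall>r\<in>P. \<forall>b\<in>set (rbody r).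
      (\<forall>\<psi>\<in>body_queries b. causal_query \<psi>) \<and> (\<forall>t\<in>body_terms b. is_value t))"

definition is_interp :: "('a \<Rightarrow> 'l val) \<Rightarrow> bool" where
  "is_interp I \<longleftrightarrow> (\<forall>A. is_value (I A))"

definition qval :: "('a \<Rightarrow> 'l val) \<Rightarrow> 'l query \<Rightarrow> 'a \<Rightarrow> 'l val" where
  "qval I \<psi> A = vsum {G. maxle G (I A) \<and> \<psi> G (I A)}"

fun bval :: "('a \<Rightarrow> 'l val) \<Rightarrow> ('a, 'l) body \<Rightarrow> 'l val" where
  "bval I (Pos \<psi> A) = qval I \<psi> A"
| "bval I (Neg \<psi> A) = (if qval I \<psi> A = vzero then vone else vzero)"
| "bval I (Cons \<psi> A) = (if qval I \<psi> A \<noteq> vzero then vone else vzero)"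
| "bval I (Tm t) = t"

fun rlabel :: "'l option \<Rightarrow> 'l val" where
  "rlabel None = vone"
| "rlabel (Some l) = vlabel l"

definition is_model :: "('a, 'l) program \<Rightarrow> ('a \<Rightarrow> 'l val) \<Rightarrow> bool" where
  "is_model P I \<longleftrightarrow> is_interp I \<and>
     (\<forall>r\<in>P. vapp (vprod (bval I ` set (rbody r))) (rlabel (rlab r)) \<subseteq> I (rhead r))"

definition reduct_query :: "'l query \<Rightarrow> 'l val \<Rightarrow> 'l query" where
  "reduct_query \<psi> t = (\<lambda>G u. \<exists>G'. is_cvalue G' \<and> G' \<subseteq> G \<and> maxle G' t \<and> \<psi> G' t)"

fun is_naf :: "('a, 'l) body \<Rightarrow> bool" where
  "is_naf (Neg \<psi> A) = True"
| "is_naf (Cons \<psi> A) = True"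
| "is_naf _ = False"

fun reduce_elem :: "('a \<Rightarrow> 'l val) \<Rightarrow> ('a, 'l) body \<Rightarrow> ('a, 'l) body" where
  "reduce_elem I (Pos \<psi> A) =
     Pos (if monotonic_query \<psi> then \<psi> else reduct_query \<psi> (I A)) A"
| "reduce_elem I b = b"

definition reduct :: "('a, 'l) program \<Rightarrow> ('a \<Rightarrow> 'l val) \<Rightarrow> ('a, 'l) program" where
  "reduct P I = {Rule (rlab r) (rhead r) (map (reduce_elem I) (filter (\<lambda>b. \<not> is_naf b) (rbody r))) | r.
      r \<in> P \<and> (\<forall>b\<in>set (rbody r). is_naf b \<longrightarrow> bval I b \<noteq> vzero)}"

definition least_model :: "('a, 'l) program \<Rightarrow> ('a \<Rightarrow> 'l val) \<Rightarrow> bool" where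
  "least_model P I \<longleftrightarrow> is_model P I \<and> (\<forall>J. is_model P J \<longrightarrow> (\<forall>A. I A \<subseteq> J A))"

definition stable_model :: "('a, 'l) program \<Rightarrow> ('a \<Rightarrow> 'l val) \<Rightarrow> bool" where
  "stable_model P I \<longleftrightarrow> least_model (reduct P I) I"

definition interp_prog :: "('a \<Rightarrow> 'l val) \<Rightarrow> ('a, 'l) program" where
  "interp_prog J = {Rule None A [Tm (J A)] | A. True}"

end

theory Submission
  imports Defs
begin

text \<open>Let \<open>U\<close> be the set of atoms occurring in \<open>P\<^sub>b\<close>.  Reducts of \<open>P\<^sub>b\<close> only look at \<open>U\<close>
  and rules of \<open>P\<^sub>t\<close> have their heads outside \<open>U\<close>.  Hence models can be patched independently
  on \<open>U\<close> and off \<open>U\<close>: a stable model of \<open>P\<close> restricted to \<open>U\<close> is a stable model of \<open>P\<^sub>b\<close>,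
  and a stable model \<open>J\<close> of \<open>P\<^sub>b\<close> forces every stable model of \<open>J \<union> P\<^sub>t\<close> to coincide with \<open>J\<close>
  on \<open>U\<close>.  The one delicate point is minimality of a stable model \<open>I\<close> of \<open>P\<close> for \<open>J \<union> P\<^sub>t\<close>:
  a model \<open>N\<close> of the top reduct has to be lowered to \<open>I\<close> on \<open>U\<close>, but the value of a
  monotonic causal literal is not monotone in the value of its atom, because maximal causes
  of \<open>I(A)\<close> need not lie below maximal causes of \<open>N(A)\<close>.  This is repaired by adding to
  \<open>I(A)\<close> the part of \<open>N(A)\<close> that lies above no minimal graph of \<open>N(A)\<close>.\<close>

lemma is_value_causal_graph: "is_value t \<Longrightarrow> G \<in> t \<Longrightarrow> causal_graph G"
  unfolding is_value_def by blast

lemma is_value_upward: "is_value t \<Longrightarrow> G \<in> t \<Longrightarrow> causal_graph H \<Longrightarrow> G \<subseteq> H \<Longrightarrow> H \<in> t"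
  unfolding is_value_def by blast

lemma is_value_empty: "is_value {}"
  by (simp add: is_value_def)

lemma is_value_vone: "is_value vone"
  by (simp add: is_value_def vone_def)

lemma is_value_subset_vone: "is_value t \<Longrightarrow> t \<subseteq> vone"
  by (auto simp: is_value_def vone_def)

lemma causal_graph_empty: "causal_graph {}"
  by (simp add: causal_graph_def trans_def)

lemma up_subset_value_iff: "causal_graph g \<Longrightarrow> is_value t \<Longrightarrow> up g \<subseteq> t \<longleftrightarrow> g \<in> t"
  by (auto simp: up_def is_value_def)

lemma up_subset_up_iff: "causal_graph g \<Longrightarrow> up g \<subseteq> up h \<longleftrightarrow> h \<subseteq> g"
  by (auto simp: up_def)

lemma maxle_up: "maxle G t \<Longrightarrow> \<exists>g. causal_graph g \<and> G = up g \<and> g \<in> t"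
  by (auto simp: maxle_def is_cvalue_def up_def)

lemma subset_gconcat: "G\<^sub>1 \<subseteq> gconcat G\<^sub>1 G\<^sub>2"
  unfolding gconcat_def by (auto intro: r_into_trancl')

lemma gconcat_empty_right: "causal_graph H \<Longrightarrow> gconcat H {} = H"
  unfolding gconcat_def verts_def causal_graph_def by simp

lemma vapp_subset_vone: "vapp t u \<subseteq> vone"
  by (auto simp: vapp_def vone_def)

lemma vapp_vprod_singleton_vone:
  assumes t: "is_value t"
  shows "vapp (vprod {t}) vone = t"
proof -
  have "vprod {t} = t"
    using is_value_causal_graph[OF t] by (auto simp: vprod_def)
  moreover have "vapp t vone = t"
  proof
    show "vapp t vone \<subseteq> t"
      using subset_gconcat is_value_upward[OF t] by (fastforce simp: vapp_def)
    show "t \<subseteq> vapp t vone"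
    proof
      fix H assume H: "H \<in> t"
      then have "causal_graph H" by (rule is_value_causal_graph[OF t])
      then show "H \<in> vapp t vone"
        using H causal_graph_empty gconcat_empty_right unfolding vapp_def vone_def by fastforce
    qed
  qed
  ultimately show ?thesis by simp
qed

lemma is_interp_override_const:
  "is_interp I \<Longrightarrow> is_value t \<Longrightarrow> is_interp (override_on (\<lambda>_. t) I U)"
  by (simp add: is_interp_def override_on_def)

definition rule_sat :: "('a \<Rightarrow> 'l val) \<Rightarrow> ('a, 'l) rule \<Rightarrow> bool" where
  "rule_sat I r \<longleftrightarrow> vapp (vprod (bval I ` set (rbody r))) (rlabel (rlab r)) \<subseteq> I (rhead r)"

lemma is_model_iff_rule_sat: "is_model P I \<longleftrightarrow> is_interp I \<and> (\<forall>r\<in>P. rule_sat I r)"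
  by (simp add: is_model_def rule_sat_def)

lemma is_model_Un: "is_model (P \<union> Q) I \<longleftrightarrow> is_model P I \<and> is_model Q I"
  by (auto simp: is_model_iff_rule_sat)

lemma is_model_is_interp: "is_model P I \<Longrightarrow> is_interp I"
  by (simp add: is_model_def)

lemma rule_sat_if_head_vone: "I (rhead r) = vone \<Longrightarrow> rule_sat I r"
  using vapp_subset_vone by (simp add: rule_sat_def)

lemma rule_sat_antimono:
  assumes "\<forall>b\<in>set (rbody r). bval M b \<subseteq> bval N b" and "N (rhead r) \<subseteq> M (rhead r)"
    and "rule_sat N r"
  shows "rule_sat M r"
proof -
  have "vprod (bval M ` set (rbody r)) \<subseteq> vprod (bval N ` set (rbody r))"
    using assms(1) by (auto simp: vprod_def)
  then have "vapp (vprod (bval M ` set (rbody r))) (rlabel (rlab r))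
      \<subseteq> vapp (vprod (bval N ` set (rbody r))) (rlabel (rlab r))"
    by (fastforce simp: vapp_def)
  with assms(2,3) show ?thesis by (auto simp: rule_sat_def)
qed

lemma body_atoms_subset_rule_atoms: "b \<in> set (rbody r) \<Longrightarrow> body_atoms b \<subseteq> rule_atoms r"
  by (auto simp: rule_atoms_def)

lemma bval_cong: "\<forall>A\<in>body_atoms b. I A = J A \<Longrightarrow> bval I b = bval J b"
  by (cases b) (auto simp: qval_def)

lemma reduce_elem_cong: "\<forall>A\<in>body_atoms b. I A = J A \<Longrightarrow> reduce_elem I b = reduce_elem J b"
  by (cases b) auto

lemma rule_sat_cong:
  assumes "\<forall>A\<in>rule_atoms r. I A = J A"
  shows "rule_sat I r \<longleftrightarrow> rule_sat J r"
proof -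
  have "bval I ` set (rbody r) = bval J ` set (rbody r)"
    using assms body_atoms_subset_rule_atoms by (intro image_cong refl bval_cong) blast
  moreover have "I (rhead r) = J (rhead r)"
    using assms by (simp add: rule_atoms_def)
  ultimately show ?thesis by (simp add: rule_sat_def)
qed

lemma is_model_interp_prog_iff:
  assumes "is_interp J"
  shows "is_model (interp_prog J) N \<longleftrightarrow> is_interp N \<and> (\<forall>A. J A \<subseteq> N A)"
proof -
  have "rule_sat N (Rule None A [Tm (J A)]) \<longleftrightarrow> J A \<subseteq> N A" for A
    using assms by (simp add: rule_sat_def is_interp_def vapp_vprod_singleton_vone)
  then show ?thesis
    by (auto simp: is_model_iff_rule_sat interp_prog_def)
qed

lemma stable_modelI:
  "is_model (reduct P I) I \<Longrightarrow> (\<And>N A. is_model (reduct P I) N \<Longrightarrow> I A \<subseteq> N A) \<Longrightarrow>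
   stable_model P I"
  by (simp add: stable_model_def least_model_def)

lemma stable_model_is_model: "stable_model P I \<Longrightarrow> is_model (reduct P I) I"
  by (simp add: stable_model_def least_model_def)

lemma stable_model_least: "stable_model P I \<Longrightarrow> is_model (reduct P I) N \<Longrightarrow> I A \<subseteq> N A"
  by (simp add: stable_model_def least_model_def)

lemma reduct_Un: "reduct (P \<union> Q) I = reduct P I \<union> reduct Q I"
  unfolding reduct_def by blast

lemma reduct_interp_prog: "reduct (interp_prog J) I = interp_prog J"
  unfolding reduct_def interp_prog_def by force

lemma reduct_interp_prog_Un: "reduct (interp_prog J \<union> P) K = interp_prog J \<union> reduct P K"
  by (simp add: reduct_Un reduct_interp_prog)

lemma reduct_cong:
  assumes "\<forall>r\<in>P. \<forall>A\<in>rule_atoms r. I A = J A"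
  shows "reduct P I = reduct P J"
proof -
  have agree: "\<forall>A\<in>body_atoms b. I A = J A" if "r \<in> P" "b \<in> set (rbody r)" for r b
    using assms that body_atoms_subset_rule_atoms by blast
  have "map (reduce_elem I) (filter (\<lambda>b. \<not> is_naf b) (rbody r))
      = map (reduce_elem J) (filter (\<lambda>b. \<not> is_naf b) (rbody r))"
    and "(\<forall>b\<in>set (rbody r). is_naf b \<longrightarrow> bval I b \<noteq> vzero)
      \<longleftrightarrow> (\<forall>b\<in>set (rbody r). is_naf b \<longrightarrow> bval J b \<noteq> vzero)"
    if "r \<in> P" for r
    using reduce_elem_cong[OF agree[OF that]] bval_cong[OF agree[OF that]] by auto
  then show ?thesis
    unfolding reduct_def by (metis (no_types, lifting))
qed

lemma reduct_rule_origin: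
  assumes "r' \<in> reduct P I"
  shows "\<exists>r\<in>P. rhead r' = rhead r \<and> rule_atoms r' \<subseteq> rule_atoms r"
proof -
  obtain r where "r \<in> P"
    and r': "r' = Rule (rlab r) (rhead r) (map (reduce_elem I) (filter (\<lambda>b. \<not> is_naf b) (rbody r)))"
    using assms unfolding reduct_def by blast
  moreover have "body_atoms (reduce_elem I b) = body_atoms b" for b
    by (cases b) auto
  then have "rule_atoms r' \<subseteq> rule_atoms r"
    using r' by (auto simp: rule_atoms_def)
  ultimately show ?thesis
    by auto
qed

lemma monotonic_reduct_query: "monotonic_query (reduct_query \<psi> t)"
  unfolding monotonic_query_def reduct_query_def by blast

lemma reduct_body_cases:
  assumes "r \<in> reduct P I" and "b \<in> set (rbody r)"
  obtains t where "b = Tm t" | \<psi> A where "b = Pos \<psi> A" and "monotonic_query \<psi>"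
proof -
  obtain b\<^sub>0 where "b = reduce_elem I b\<^sub>0" and "\<not> is_naf b\<^sub>0"
    using assms unfolding reduct_def by auto
  then show ?thesis
    by (cases b\<^sub>0) (auto intro: that simp: monotonic_reduct_query)
qed

lemma bval_reduct_mono:
  assumes "r \<in> reduct P K" and "b \<in> set (rbody r)"
    and "\<And>\<psi> A. monotonic_query \<psi> \<Longrightarrow> A \<in> body_atoms b \<Longrightarrow> qval M \<psi> A \<subseteq> qval N \<psi> A"
  shows "bval M b \<subseteq> bval N b"
proof (cases rule: reduct_body_cases[OF assms(1,2)])
  case (2 \<psi> A)
  then show ?thesis
    using assms(3)[of \<psi> A] by simp
qed simp

lemma qval_mono_maxle:
  assumes "monotonic_query \<psi>" and "is_value (I A)" and "is_value (N A)"
    and "\<And>G. maxle G (I A) \<Longrightarrow> \<exists>G'. maxle G' (N A) \<and> G \<subseteq> G'"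
  shows "qval I \<psi> A \<subseteq> qval N \<psi> A"
proof
  fix h assume "h \<in> qval I \<psi> A"
  then obtain G where G: "h \<in> G" "maxle G (I A)" "\<psi> G (I A)"
    unfolding qval_def vsum_def by blast
  then obtain G' where G': "maxle G' (N A)" "G \<subseteq> G'"
    using assms(4) by blast
  have "is_cvalue G" and "is_cvalue G'"
    using G(2) G'(1) by (simp_all add: maxle_def)
  then have "\<psi> G' (N A)"
    using assms(1-3) G(3) G'(2) unfolding monotonic_query_def by blast
  then show "h \<in> qval N \<psi> A"
    using G G' unfolding qval_def vsum_def by blast
qed

definition minimal_graph :: "'l val \<Rightarrow> 'l graph \<Rightarrow> bool" where
  "minimal_graph W m \<longleftrightarrow> m \<in> W \<and> (\<forall>h\<in>W. h \<subseteq> m \<longrightarrow> h = m)"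

definition unfounded :: "'l val \<Rightarrow> 'l val" where
  "unfounded W = {h. causal_graph h \<and> (\<exists>g\<in>W. g \<subseteq> h \<and> (\<forall>m. minimal_graph W m \<longrightarrow> \<not> m \<subseteq> g))}"

lemma unfounded_upward:
  assumes "G \<in> unfounded W" and "causal_graph H" and "G \<subseteq> H"
  shows "H \<in> unfounded W"
proof -
  obtain g where "g \<in> W" "g \<subseteq> G" "\<forall>m. minimal_graph W m \<longrightarrow> \<not> m \<subseteq> g"
    using assms(1) unfolding unfounded_def by blast
  then show ?thesis
    using assms(2,3) unfolding unfounded_def by (blast intro: order_trans)
qed

lemma is_value_Un_unfounded: "is_value V \<Longrightarrow> is_value (V \<union> unfounded W)"
  using unfounded_upward unfolding is_value_def by (auto simp: unfounded_def)

lemma unfounded_descends: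
  assumes W: "is_value W" and g: "g \<in> unfounded W"
  shows "\<exists>h. causal_graph h \<and> h \<subset> g \<and> up h \<subseteq> unfounded W"
proof -
  obtain g\<^sub>0 where g\<^sub>0: "g\<^sub>0 \<in> W" "g\<^sub>0 \<subseteq> g" "\<forall>m. minimal_graph W m \<longrightarrow> \<not> m \<subseteq> g\<^sub>0"
    using g unfolding unfounded_def by blast
  then have "\<not> minimal_graph W g\<^sub>0" by blast
  then obtain h where h: "h \<in> W" "h \<subset> g\<^sub>0"
    using g\<^sub>0(1) unfolding minimal_graph_def by blast
  have "\<forall>m. minimal_graph W m \<longrightarrow> \<not> m \<subseteq> h"
    using g\<^sub>0(3) h(2) by (meson order_trans less_imp_le)
  then have "up h \<subseteq> unfounded W"
    using h(1) by (auto simp: up_def unfounded_def)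
  moreover have "h \<subset> g"
    using h(2) g\<^sub>0(2) by (rule psubset_subset_trans)
  ultimately show ?thesis
    using h(1) is_value_causal_graph[OF W] by blast
qed

lemma maxle_up_minimal_graph:
  assumes W: "is_value W" and m: "minimal_graph W m"
  shows "maxle (up m) W"
proof -
  have cm: "causal_graph m" and mW: "m \<in> W"
    using m is_value_causal_graph[OF W] by (auto simp: minimal_graph_def)
  have "\<not> up m \<subset> up g" if "causal_graph g" "up g \<subseteq> W" for g
  proof
    assume "up m \<subset> up g"
    then have "g \<subseteq> m" and "g \<noteq> m"
      using up_subset_up_iff[OF cm] by auto
    moreover have "g \<in> W"
      using up_subset_value_iff[OF that(1) W] that(2) by simp
    ultimately show False
      using m unfolding minimal_graph_def by blast
  qed
  moreover have "up m \<subseteq> W"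
    using up_subset_value_iff[OF cm W] mW by simp
  ultimately show ?thesis
    using cm unfolding maxle_def is_cvalue_def by blast
qed

text \<open>A maximal cause cannot be generated inside the unfounded part, which always contains a
  strictly larger cause; so its generator lies in \<open>V\<close> above a minimal graph of \<open>W\<close>.\<close>

lemma maxle_Un_unfounded:
  assumes V: "is_value V" and W: "is_value W" and "V \<subseteq> W"
    and max: "maxle G (V \<union> unfounded W)"
  shows "maxle G V" and "\<exists>G'. maxle G' W \<and> G \<subseteq> G'"
proof -
  obtain g where g: "causal_graph g" "G = up g" "g \<in> V \<union> unfounded W"
    using maxle_up[OF max] by blast
  have "g \<notin> unfounded W"
  proof
    assume "g \<in> unfounded W"
    then obtain h where h: "causal_graph h" "h \<subset> g" "up h \<subseteq> unfounded W"
      using unfounded_descends[OF W] by blast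
    have "up g \<subseteq> up h" and "\<not> up h \<subseteq> up g"
      using up_subset_up_iff[OF g(1)] up_subset_up_iff[OF h(1)] h(2) by auto
    moreover have "is_cvalue (up h)"
      using h(1) by (auto simp: is_cvalue_def)
    ultimately show False
      using h(3) max g(2) unfolding maxle_def by blast
  qed
  then have gV: "g \<in> V" using g(3) by blast
  then show "maxle G V"
    using max g up_subset_value_iff[OF g(1) V] unfolding maxle_def by blast
  obtain m where m: "minimal_graph W m" "m \<subseteq> g"
    using \<open>g \<notin> unfounded W\<close> gV \<open>V \<subseteq> W\<close> g(1) unfolding unfounded_def by blast
  then have "maxle (up m) W" and "G \<subseteq> up m"
    using maxle_up_minimal_graph[OF W] g(2) by (auto simp: up_def)
  then show "\<exists>G'. maxle G' W \<and> G \<subseteq> G'" by blast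
qed

locale program_split =
  fixes Pb Pt :: "('a, 'l) program"
  assumes top_heads_not_in_bottom: "\<forall>r\<in>Pt. \<forall>s\<in>Pb. rhead r \<notin> rule_atoms s"
begin

definition bottom_atoms :: "'a set" where
  "bottom_atoms = \<Union> (rule_atoms ` Pb)"

lemma rule_atoms_reduct_bottom: "r \<in> reduct Pb K \<Longrightarrow> rule_atoms r \<subseteq> bottom_atoms"
  using reduct_rule_origin unfolding bottom_atoms_def by blast

lemma head_reduct_bottom: "r \<in> reduct Pb K \<Longrightarrow> rhead r \<in> bottom_atoms"
  using rule_atoms_reduct_bottom by (auto simp: rule_atoms_def)

lemma head_reduct_top: "r \<in> reduct Pt K \<Longrightarrow> rhead r \<notin> bottom_atoms"
  using reduct_rule_origin[of r Pt K] top_heads_not_in_bottom by (auto simp: bottom_atoms_def)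

lemma reduct_bottom_cong: "\<forall>A\<in>bottom_atoms. K A = K' A \<Longrightarrow> reduct Pb K = reduct Pb K'"
  unfolding bottom_atoms_def by (intro reduct_cong) blast

lemma is_model_reduct_bottom_cong:
  assumes "is_model (reduct Pb K) I" and "is_interp J" and "\<forall>A\<in>bottom_atoms. I A = J A"
  shows "is_model (reduct Pb K) J"
proof -
  have "rule_sat J r" if "r \<in> reduct Pb K" for r
  proof -
    have agree: "\<forall>A\<in>rule_atoms r. I A = J A"
      using assms(3) rule_atoms_reduct_bottom[OF that] by blast
    show ?thesis
      using rule_sat_cong[OF agree] assms(1) that by (simp add: is_model_iff_rule_sat)
  qed
  then show ?thesis
    using assms(2) by (simp add: is_model_iff_rule_sat)
qed

lemma is_model_reduct_top_vone:
  assumes "is_interp I"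
  shows "is_model (reduct Pt K) (override_on (\<lambda>_. vone) I bottom_atoms)"
proof -
  have "rule_sat (override_on (\<lambda>_. vone) I bottom_atoms) r" if "r \<in> reduct Pt K" for r
    using head_reduct_top[OF that] by (intro rule_sat_if_head_vone) simp
  moreover have "is_interp (override_on (\<lambda>_. vone) I bottom_atoms)"
    by (rule is_interp_override_const[OF assms is_value_vone])
  ultimately show ?thesis
    by (simp add: is_model_iff_rule_sat)
qed

lemma stable_bottom:
  assumes I: "stable_model (Pb \<union> Pt) I"
  shows "stable_model Pb (override_on (\<lambda>_. {}) I bottom_atoms)" (is "stable_model Pb ?J")
proof (rule stable_modelI)
  have red: "reduct Pb ?J = reduct Pb I"
    by (rule reduct_bottom_cong) simp
  have mI: "is_model (reduct Pb I) I"
    using stable_model_is_model[OF I] by (simp add: reduct_Un is_model_Un)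
  then have iI: "is_interp I"
    by (rule is_model_is_interp)
  have "is_interp ?J"
    by (rule is_interp_override_const[OF iI is_value_empty])
  with mI show "is_model (reduct Pb ?J) ?J"
    unfolding red by (rule is_model_reduct_bottom_cong) simp
  fix N A assume N: "is_model (reduct Pb ?J) N"
  let ?K = "override_on (\<lambda>_. vone) N bottom_atoms"
  have iN: "is_interp N"
    using N by (rule is_model_is_interp)
  then have "is_interp ?K"
    by (rule is_interp_override_const[OF _ is_value_vone])
  with N have "is_model (reduct Pb I) ?K"
    unfolding red by (rule is_model_reduct_bottom_cong) simp
  then have "is_model (reduct (Pb \<union> Pt) I) ?K"
    using is_model_reduct_top_vone[OF iN] by (simp add: reduct_Un is_model_Un)
  then have "I A \<subseteq> ?K A"
    by (rule stable_model_least[OF I])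
  then show "?J A \<subseteq> N A"
    by (cases "A \<in> bottom_atoms") auto
qed

lemma stable_le_top_reduct_model:
  assumes I: "stable_model (Pb \<union> Pt) I" and N: "is_model (reduct Pt I) N"
    and IN: "\<forall>A\<in>bottom_atoms. I A \<subseteq> N A"
  shows "I A \<subseteq> N A"
proof -
  define M where "M = override_on N (\<lambda>A. I A \<union> unfounded (N A)) bottom_atoms"
  have mI: "is_model (reduct (Pb \<union> Pt) I) I"
    by (rule stable_model_is_model[OF I])
  have vI: "is_value (I A)" and vN: "is_value (N A)" for A
    using is_model_is_interp[OF mI] is_model_is_interp[OF N] by (auto simp: is_interp_def)
  have vM: "is_value (M A)" for A
    using vN is_value_Un_unfounded[OF vI] by (simp add: M_def override_on_def)
  have maxle_M: "maxle G (I A) \<and> (\<exists>G'. maxle G' (N A) \<and> G \<subseteq> G')"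
    if "maxle G (M A)" "A \<in> bottom_atoms" for G A
    using that maxle_Un_unfounded[OF vI vN IN[rule_format]] by (simp add: M_def)
  have qval_M_I: "qval M \<psi> A \<subseteq> qval I \<psi> A" if "monotonic_query \<psi>" "A \<in> bottom_atoms" for \<psi> A
    by (rule qval_mono_maxle[of \<psi> M A I, OF that(1) vM vI]) (use maxle_M that(2) in blast)
  have qval_M_N: "qval M \<psi> A \<subseteq> qval N \<psi> A" if "monotonic_query \<psi>" for \<psi> A
  proof (cases "A \<in> bottom_atoms")
    case True
    show ?thesis
      by (rule qval_mono_maxle[of \<psi> M A N, OF that vM vN]) (use maxle_M True in blast)
  qed (simp add: M_def qval_def)
  have "rule_sat M r" if "r \<in> reduct Pb I" for r
  proof (rule rule_sat_antimono)
    show "\<forall>b\<in>set (rbody r). bval M b \<subseteq> bval I b"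
    proof
      fix b assume b: "b \<in> set (rbody r)"
      have "body_atoms b \<subseteq> bottom_atoms"
        using rule_atoms_reduct_bottom[OF that] body_atoms_subset_rule_atoms[OF b] by blast
      then show "bval M b \<subseteq> bval I b"
        using qval_M_I by (intro bval_reduct_mono[OF that b]) auto
    qed
    show "I (rhead r) \<subseteq> M (rhead r)"
      using head_reduct_bottom[OF that] by (simp add: M_def)
    show "rule_sat I r"
      using mI that by (simp add: reduct_Un is_model_iff_rule_sat)
  qed
  moreover have "rule_sat M r" if "r \<in> reduct Pt I" for r
  proof (rule rule_sat_antimono)
    show "\<forall>b\<in>set (rbody r). bval M b \<subseteq> bval N b"
      using bval_reduct_mono[OF that] qval_M_N by blast
    show "N (rhead r) \<subseteq> M (rhead r)"
      using head_reduct_top[OF that] by (simp add: M_def)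
    show "rule_sat N r"
      using N that by (simp add: is_model_iff_rule_sat)
  qed
  ultimately have "is_model (reduct (Pb \<union> Pt) I) M"
    using vM by (auto simp: reduct_Un is_model_iff_rule_sat is_interp_def)
  then have "I A \<subseteq> M A"
    by (rule stable_model_least[OF I])
  then show ?thesis
    using IN by (cases "A \<in> bottom_atoms") (auto simp: M_def)
qed

lemma stable_top:
  assumes I: "stable_model (Pb \<union> Pt) I"
  shows "stable_model (interp_prog (override_on (\<lambda>_. {}) I bottom_atoms) \<union> Pt) I"
    (is "stable_model (interp_prog ?J \<union> Pt) I")
proof (rule stable_modelI)
  have mI: "is_model (reduct (Pb \<union> Pt) I) I"
    by (rule stable_model_is_model[OF I])
  then have iI: "is_interp I"
    by (rule is_model_is_interp)
  then have iJ: "is_interp ?J"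
    by (rule is_interp_override_const[OF _ is_value_empty])
  have "is_model (reduct Pt I) I"
    using mI by (simp add: reduct_Un is_model_Un)
  moreover have "\<forall>A. ?J A \<subseteq> I A"
    by (simp add: override_on_def)
  ultimately show "is_model (reduct (interp_prog ?J \<union> Pt) I) I"
    using iI is_model_interp_prog_iff[OF iJ] by (simp add: reduct_interp_prog_Un is_model_Un)
  fix N A assume "is_model (reduct (interp_prog ?J \<union> Pt) I) N"
  then have "is_model (reduct Pt I) N" and "\<forall>A. ?J A \<subseteq> N A"
    using is_model_interp_prog_iff[OF iJ] by (simp_all add: reduct_interp_prog_Un is_model_Un)
  then show "I A \<subseteq> N A"
    using stable_le_top_reduct_model[OF I] by (metis override_on_apply_in)
qed

lemma stable_top_agrees_on_bottom:
  assumes J: "stable_model Pb J" and I: "stable_model (interp_prog J \<union> Pt) I"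
  shows "\<forall>A\<in>bottom_atoms. J A = I A"
proof -
  have iJ: "is_interp J"
    using stable_model_is_model[OF J] by (rule is_model_is_interp)
  have JI: "\<forall>A. J A \<subseteq> I A"
    using stable_model_is_model[OF I] is_model_interp_prog_iff[OF iJ]
    by (simp add: reduct_interp_prog_Un is_model_Un)
  let ?N = "override_on (\<lambda>_. vone) J bottom_atoms"
  have "is_interp ?N"
    by (rule is_interp_override_const[OF iJ is_value_vone])
  moreover have "\<forall>A. J A \<subseteq> ?N A"
    using iJ unfolding is_interp_def by (simp add: override_on_def is_value_subset_vone)
  ultimately have "is_model (interp_prog J) ?N"
    using is_model_interp_prog_iff[OF iJ] by blast
  then have "is_model (reduct (interp_prog J \<union> Pt) I) ?N"
    using is_model_reduct_top_vone[OF iJ] by (simp add: reduct_interp_prog_Un is_model_Un)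
  then have "I A \<subseteq> ?N A" for A
    by (rule stable_model_least[OF I])
  then show ?thesis
    using JI by (metis override_on_apply_in subset_antisym)
qed

lemma stable_combine:
  assumes J: "stable_model Pb J" and I: "stable_model (interp_prog J \<union> Pt) I"
  shows "stable_model (Pb \<union> Pt) I"
proof (rule stable_modelI)
  have agree: "\<forall>A\<in>bottom_atoms. J A = I A"
    by (rule stable_top_agrees_on_bottom[OF J I])
  then have redJ: "reduct Pb I = reduct Pb J"
    by (intro reduct_bottom_cong) simp
  have iJ: "is_interp J" and mJ: "is_model (reduct Pb J) J"
    using stable_model_is_model[OF J] is_model_is_interp by blast+
  have mI: "is_model (reduct Pt I) I"
    using stable_model_is_model[OF I] by (simp add: reduct_interp_prog_Un is_model_Un)
  then have iI: "is_interp I"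
    by (rule is_model_is_interp)
  show "is_model (reduct (Pb \<union> Pt) I) I"
    using is_model_reduct_bottom_cong[OF mJ iI agree] mI by (simp add: reduct_Un redJ is_model_Un)
  fix N A assume "is_model (reduct (Pb \<union> Pt) I) N"
  then have NJ: "is_model (reduct Pb J) N" and Nt: "is_model (reduct Pt I) N"
    by (simp_all add: reduct_Un redJ is_model_Un)
  have "\<forall>A. J A \<subseteq> N A"
    using stable_model_least[OF J NJ] by blast
  then have "is_model (interp_prog J) N"
    using is_model_interp_prog_iff[OF iJ] is_model_is_interp[OF Nt] by blast
  then have "is_model (reduct (interp_prog J \<union> Pt) I) N"
    using Nt by (simp add: reduct_interp_prog_Un is_model_Un)
  then show "I A \<subseteq> N A"
    by (rule stable_model_least[OF I])
qed

end

theorem theorem3: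
  fixes P Pb Pt :: "('a, 'l) program" and I :: "'a \<Rightarrow> 'l val"
  assumes "causal_program P"
    and "Pb \<union> Pt = P" and "Pb \<inter> Pt = {}"
    and "\<forall>r\<in>Pt. \<forall>s\<in>Pb. rhead r \<notin> rule_atoms s"
  shows "stable_model P I \<longleftrightarrow>
         (\<exists>J. stable_model Pb J \<and> stable_model (interp_prog J \<union> Pt) I)"
proof -
  interpret program_split Pb Pt
    using assms(4) by unfold_locales
  show ?thesis
    unfolding assms(2)[symmetric]
    using stable_bottom stable_top stable_combine by blast
qed

end
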